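(* Let $\{\rho_n\}_{n\ge1}$ be probability densities on $\mathbb{R}$ with $\rho_n\ge0$, $\int\rho_n=1$ and $\lim_{n\to\infty}\int_{|t|>\delta}\rho_n(t)\,dt=0$ for all $\delta>0$; for $v\in\mathbb{R}^N$ let $D_{n,v}w(x)=\int_{\mathbb{R}}\frac{w(x+tv)-w(x)}{t}\rho_n(t)\,dt$, and for a multi-index $\bar n=(n_1,\dots,n_N)$ let $\nabla_{\bar n}w(x)\in\mathbb{R}^N$ have components $D_{n_i,e_i}w(x)$ ($e_i$ the standard basis). Let $u\in C^1(\mathbb{R}^N)$, $x_0\in\mathbb{R}^N$, $R>0$, and let $\tilde u$ (obtained from $u$ via a smooth cutoff function) satisfy $\tilde u=u$ on the ball $B_R(x_0)$ and $\tilde u=0$ outside a compact set $K\supset B_R(x_0)$, with $\tilde u\in C^1_0(\mathbb{R}^N)$. Define $$r(x,x_0)=\tilde u(x)-\tilde u(x_0)-(x-x_0)^T\nabla u(x_0),\qquad r_{\bar n}(x,x_0)=\tilde u(x)-\tilde u(x_0)-(x-x_0)^T\nabla_{\bar n}\tilde u(x_0).$$ Then $r_{\bar n}(\cdot,x_0)\to r(\cdot,x_0)$ uniformly on $B_R(x_0)$ as $\min(\bar n)\to\infty$. Consequently the nonlocal Taylor approximant $A_{\bar n}(x)=\tilde u(x_0)+(x-x_0)^T\nabla_{\bar n}\tilde u(x_0)$ converges to the standard Taylor approximant $A(x)=\tilde u(x_0)+(x-x_0)^T\nabla u(x_0)$ uniformly on $B_R(x_0)$ as $\min(\bar n)\t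o\infty$.
   Context: $\min(\bar n)=\min_i n_i$. *)

theory Defs
  imports "HOL-Analysis.Analysis"
begin

definition nl_deriv ::
  "(nat \<Rightarrow> real \<Rightarrow> real) \<Rightarrow> nat \<Rightarrow> real^'n \<Rightarrow> (real^'n \<Rightarrow> real) \<Rightarrow> real^'n \<Rightarrow> real" where
  "nl_deriv \<rho> n v w x = (LINT t|lborel. ((w (x + t *\<^sub>R v) - w x) / t) * \<rho> n t)"

definition nl_grad ::
  "(nat \<Rightarrow> real \<Rightarrow> real) \<Rightarrow> ('n::finite \<Rightarrow> nat) \<Rightarrow> (real^'n \<Rightarrow> real) \<Rightarrow> real^'n \<Rightarrow> real^'n" where
  "nl_grad \<rho> nb w x = (\<chi> i. nl_deriv \<rho> (nb i) (axis i 1) w x)"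

end

theory Submission
  imports Defs
begin

text \<open>Each component of the nonlocal gradient is an average, against \<open>\<rho>\<^sub>n\<close>, of the
  difference quotients \<open>(ut (x0 + t e\<^sub>i) - ut x0) / t\<close>. Being \<open>C\<^sup>1\<close> with compact support,
  \<open>ut\<close> is Lipschitz, so these quotients are bounded; they tend to \<open>\<partial>\<^sub>i ut x0 = \<partial>\<^sub>i u x0\<close> as
  \<open>t \<rightarrow> 0\<close>, and since \<open>\<rho>\<^sub>n\<close> concentrates at \<open>0\<close> the averages converge to the same limit.
  Both differences in the theorem equal \<open>\<plusminus>(x - x0) \<bullet> (\<nabla>\<^sub>n ut x0 - \<nabla>u x0)\<close>, which is at most
  \<open>R \<parallel>\<nabla>\<^sub>n ut x0 - \<nabla>u x0\<parallel>\<close> on the ball.\<close>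

lemma approx_identity_deviation_le:
  fixes \<rho> g :: "real \<Rightarrow> real"
  assumes nonneg: "\<And>t. \<rho> t \<ge> 0"
    and int: "integrable lborel \<rho>"
    and one: "(LINT t|lborel. \<rho> t) = 1"
    and g_meas: "g \<in> borel_measurable lborel"
    and far: "\<And>t. \<bar>g t - d\<bar> \<le> C"
    and near: "\<And>t. t \<noteq> 0 \<Longrightarrow> \<bar>t\<bar> \<le> \<delta> \<Longrightarrow> \<bar>g t - d\<bar> \<le> \<eta>"
    and "0 \<le> \<eta>"
  shows "\<bar>(LINT t|lborel. g t * \<rho> t) - d\<bar> \<le> \<eta> + C * (LINT t:{t. \<delta> < \<bar>t\<bar>}|lborel. \<rho> t)"
proof -
  define A where "A = {t::real. \<delta> < \<bar>t\<bar>}"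
  have A_sets: "A \<in> sets lborel" unfolding A_def by measurable
  have int_A: "integrable lborel (\<lambda>t. indicator A t * \<rho> t)"
    using integrable_mult_indicator[OF A_sets int] by simp
  have int_g: "integrable lborel (\<lambda>t. g t * \<rho> t)"
  proof (rule Bochner_Integration.integrable_bound[OF integrable_mult_right[OF int, of "\<bar>d\<bar> + C"]])
    have "\<bar>g t\<bar> \<le> \<bar>d\<bar> + C" for t
      using far[of t] by linarith
    then show "AE t in lborel. norm (g t * \<rho> t) \<le> norm ((\<bar>d\<bar> + C) * \<rho> t)"
      using nonneg by (auto simp: abs_mult intro!: mult_right_mono intro: order_trans[OF _ abs_ge_self])
  qed (use g_meas borel_measurable_integrable[OF int] in measurable)
  have int_deviation: "integrable lborel (\<lambda>t. (g t - d) * \<rho> t)"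
    using int_g int by (simp add: left_diff_distrib)
  have "(LINT t|lborel. g t * \<rho> t) - d = (LINT t|lborel. (g t - d) * \<rho> t)"
    using int_g int one by (simp add: left_diff_distrib)
  also have "\<bar>\<dots>\<bar> \<le> (LINT t|lborel. \<bar>(g t - d) * \<rho> t\<bar>)"
    by (rule integral_abs_bound)
  also have "\<dots> \<le> (LINT t|lborel. \<eta> * \<rho> t + C * (indicator A t * \<rho> t))"
  proof (rule integral_mono_AE)
    show "AE t in lborel. \<bar>(g t - d) * \<rho> t\<bar> \<le> \<eta> * \<rho> t + C * (indicator A t * \<rho> t)"
      using AE_lborel_singleton[of 0]
    proof eventually_elim
      case (elim t)
      have "\<bar>g t - d\<bar> \<le> (if t \<in> A then C else \<eta>)"
        using far near[of t] elim unfolding A_def by auto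
      then show ?case
        using nonneg[of t] \<open>0 \<le> \<eta>\<close> by (auto simp: abs_mult intro: mult_right_mono order_trans)
    qed
  qed (use int_deviation int int_A in auto)
  also have "\<dots> = \<eta> + C * (LINT t:A|lborel. \<rho> t)"
    using int int_A one by (simp add: set_lebesgue_integral_def)
  finally show ?thesis unfolding A_def .
qed

lemma has_derivative_inner_eq_on_open:
  fixes f g :: "'a::real_inner \<Rightarrow> real"
  assumes "(f has_derivative (\<lambda>h. a \<bullet> h)) (at x)" "(g has_derivative (\<lambda>h. b \<bullet> h)) (at x)"
    and "open S" "x \<in> S" "\<And>y. y \<in> S \<Longrightarrow> f y = g y"
  shows "a = b"
proof -
  have "(f has_derivative (\<lambda>h. b \<bullet> h)) (at x)"
    by (rule has_derivative_transform_within_open[OF assms(2) assms(3,4)]) (use assms(5) in simp)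
  from has_derivative_unique[OF assms(1) this]
  have "a \<bullet> (a - b) = b \<bullet> (a - b)"
    by meson
  then have "(a - b) \<bullet> (a - b) = 0"
    by (simp add: inner_diff_left)
  then show ?thesis
    by simp
qed

lemma C1_compact_support_imp_lipschitz:
  fixes f :: "'a::euclidean_space \<Rightarrow> real"
  assumes deriv: "\<And>x. (f has_derivative (\<lambda>h. Df x \<bullet> h)) (at x)"
    and Df_cont: "continuous_on UNIV Df"
    and "compact K"
    and zero: "\<And>x. x \<notin> K \<Longrightarrow> f x = 0"
  obtains B where "B-lipschitz_on UNIV f"
proof -
  have Df_zero: "Df x = 0" if "x \<notin> K" for x
    by (rule has_derivative_inner_eq_on_open[OF deriv, where g = "\<lambda>_. 0" and S = "- K"])
       (use that zero \<open>compact K\<close> compact_imp_closed in auto)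
  obtain B where "\<And>x. x \<in> K \<Longrightarrow> norm (Df x) \<le> B"
    using compact_continuous_image[OF continuous_on_subset[OF Df_cont] \<open>compact K\<close>]
    by (metis compact_imp_bounded bounded_iff image_eqI subset_UNIV)
  then have Df_bounded: "norm (Df x) \<le> max B 0" for x
    using Df_zero[of x] by (cases "x \<in> K") (auto intro: le_max_iff_disj[THEN iffD2])
  have "(max B 0)-lipschitz_on UNIV f"
  proof (rule bounded_derivative_imp_lipschitz)
    show "onorm (\<lambda>h. Df x \<bullet> h) \<le> max B 0" for x
      using onorm_inner_right[OF bounded_linear_ident, of "Df x"] Df_bounded[of x]
      by (simp add: onorm_id)
  qed (use deriv in auto)
  then show thesis ..
qed

lemma uniform_limit_inner_tendsto:
  fixes g :: "'i \<Rightarrow> 'a::real_inner"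
  assumes "(g \<longlongrightarrow> c) F" and "bounded (p ` S)"
  shows "uniform_limit S (\<lambda>k x. p x \<bullet> g k) (\<lambda>x. p x \<bullet> c) F"
proof -
  have "uniform_limit S (\<lambda>k x. g k) (\<lambda>x. c) F"
    by (rule uniform_limitI) (auto intro: eventually_mono[OF tendstoD[OF assms(1)]])
  moreover have "bounded ((\<lambda>x. c) ` S)"
    by (rule bounded_subset[of "{c}"]) auto
  ultimately show ?thesis
    using bounded_bilinear.bounded_uniform_limit[OF bounded_bilinear_inner uniform_limit_const[where c = p]]
      assms(2) by simp
qed

definition multi_index_at_top :: "('i::finite \<Rightarrow> nat) filter" where
  "multi_index_at_top = filtercomap (\<lambda>nb. Min (range nb)) at_top"

lemma eventually_multi_index_at_top:
  "eventually P multi_index_at_top \<longleftrightarrow> (\<exists>M. \<forall>nb. Min (range nb) \<ge> M \<longrightarrow> P nb)"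
  by (simp add: multi_index_at_top_def eventually_filtercomap_at_top_linorder)

lemma filterlim_component_multi_index_at_top:
  "filterlim (\<lambda>nb. nb i) at_top multi_index_at_top"
proof -
  have "Min (range nb) \<le> nb i" for nb
    by (rule Min_le) auto
  then show ?thesis
    unfolding filterlim_at_top eventually_multi_index_at_top by (meson order_trans)
qed

locale approx_identity =
  fixes \<rho> :: "nat \<Rightarrow> real \<Rightarrow> real"
  assumes nonneg: "\<And>n t. n \<ge> 1 \<Longrightarrow> \<rho> n t \<ge> 0"
    and integrable: "\<And>n. n \<ge> 1 \<Longrightarrow> integrable lborel (\<rho> n)"
    and integral_eq_1: "\<And>n. n \<ge> 1 \<Longrightarrow> (LINT t|lborel. \<rho> n t) = 1"
    and tail_tendsto_0: "\<And>\<delta>. \<delta> > 0 \<Longrightarrow> (\<lambda>n. LINT t:{t. \<delta> < \<bar>t\<bar>}|lborel. \<rho> n t) \<longlonglongrightarrow> 0"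
begin

lemma average_tendsto:
  fixes g :: "real \<Rightarrow> real"
  assumes g_meas: "g \<in> borel_measurable lborel"
    and g_bounded: "\<And>t. \<bar>g t\<bar> \<le> L"
    and g_lim: "(g \<longlongrightarrow> d) (at 0)"
  shows "(\<lambda>n. LINT t|lborel. g t * \<rho> n t) \<longlonglongrightarrow> d"
proof (rule tendstoI)
  fix \<epsilon> :: real assume "\<epsilon> > 0"
  have "eventually (\<lambda>t. dist (g t) d < \<epsilon>/2) (at 0)"
    using g_lim \<open>\<epsilon> > 0\<close> by (intro tendstoD) auto
  then obtain \<delta> where "\<delta> > 0" and near_lt: "\<And>t. t \<noteq> 0 \<Longrightarrow> \<bar>t\<bar> \<le> \<delta> \<Longrightarrow> \<bar>g t - d\<bar> < \<epsilon>/2"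
    unfolding eventually_at_le dist_real_def by auto
  have near: "\<bar>g t - d\<bar> \<le> \<epsilon>/2" if "t \<noteq> 0" "\<bar>t\<bar> \<le> \<delta>" for t
    using near_lt[OF that] by simp
  define C where "C = L + \<bar>d\<bar>"
  have far: "\<bar>g t - d\<bar> \<le> C" for t
    using g_bounded[of t] unfolding C_def by linarith
  have "(\<lambda>n. \<epsilon>/2 + C * (LINT t:{t. \<delta> < \<bar>t\<bar>}|lborel. \<rho> n t)) \<longlonglongrightarrow> \<epsilon>/2"
    using tail_tendsto_0[OF \<open>\<delta> > 0\<close>] by (auto intro!: tendsto_eq_intros)
  then have "eventually (\<lambda>n. \<epsilon>/2 + C * (LINT t:{t. \<delta> < \<bar>t\<bar>}|lborel. \<rho> n t) < \<epsilon>) sequentially"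
    by (rule order_tendstoD(2)) (use \<open>\<epsilon> > 0\<close> in simp)
  moreover have "eventually (\<lambda>n. n \<ge> 1) sequentially"
    by (rule eventually_ge_at_top)
  ultimately show "eventually (\<lambda>n. dist (LINT t|lborel. g t * \<rho> n t) d < \<epsilon>) sequentially"
  proof eventually_elim
    case (elim n)
    have "\<bar>(LINT t|lborel. g t * \<rho> n t) - d\<bar>
        \<le> \<epsilon>/2 + C * (LINT t:{t. \<delta> < \<bar>t\<bar>}|lborel. \<rho> n t)"
      by (rule approx_identity_deviation_le)
         (use elim nonneg integrable integral_eq_1 g_meas far near \<open>\<epsilon> > 0\<close> in auto)
    with elim show ?case
      by (simp add: dist_real_def)
  qed
qed

lemma nl_deriv_tendsto:
  fixes f :: "real^'n \<Rightarrow> real"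
  assumes lip: "B-lipschitz_on UNIV f"
    and deriv: "(f has_derivative (\<lambda>h. Df \<bullet> h)) (at x)"
  shows "(\<lambda>n. nl_deriv \<rho> n v f x) \<longlonglongrightarrow> Df \<bullet> v"
proof -
  define \<phi> where "\<phi> t = f (x + t *\<^sub>R v)" for t
  have "((\<lambda>t. x + t *\<^sub>R v) has_derivative (\<lambda>t. t *\<^sub>R v)) (at 0)"
    by (auto intro!: derivative_eq_intros)
  moreover have "(f has_derivative (\<lambda>h. Df \<bullet> h)) (at (x + 0 *\<^sub>R v))"
    using deriv by simp
  ultimately have "(\<phi> has_derivative (\<lambda>t. Df \<bullet> (t *\<^sub>R v))) (at 0)"
    unfolding \<phi>_def by (rule has_derivative_compose)
  then have "(\<phi> has_real_derivative Df \<bullet> v) (at 0)"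
    by (simp add: has_field_derivative_def mult_commute_abs)
  then have quotient_lim: "((\<lambda>t. (\<phi> t - \<phi> 0) / t) \<longlongrightarrow> Df \<bullet> v) (at 0)"
    by (simp add: has_field_derivative_iff)
  have quotient_bounded: "\<bar>(\<phi> t - \<phi> 0) / t\<bar> \<le> B * norm v" for t
  proof (cases "t = 0")
    case False
    have "dist (f (x + t *\<^sub>R v)) (f x) \<le> B * dist (x + t *\<^sub>R v) x"
      by (rule lipschitz_onD[OF lip]) auto
    then have "\<bar>\<phi> t - \<phi> 0\<bar> \<le> B * (\<bar>t\<bar> * norm v)"
      by (simp add: \<phi>_def dist_real_def dist_norm)
    then have "\<bar>\<phi> t - \<phi> 0\<bar> / \<bar>t\<bar> \<le> B * (\<bar>t\<bar> * norm v) / \<bar>t\<bar>"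
      by (rule divide_right_mono) simp
    then show ?thesis
      using False by simp
  qed (use lipschitz_on_nonneg[OF lip] in simp)
  have "continuous_on UNIV \<phi>"
    unfolding \<phi>_def
    by (rule continuous_on_compose2[OF lipschitz_on_continuous_on[OF lip] _ subset_UNIV])
       (intro continuous_intros)
  then have "\<phi> \<in> borel_measurable lborel"
    by (simp add: borel_measurable_continuous_onI)
  then have "(\<lambda>t. (\<phi> t - \<phi> 0) / t) \<in> borel_measurable lborel"
    by (intro borel_measurable_divide borel_measurable_diff) auto
  from average_tendsto[OF this quotient_bounded quotient_lim]
  show ?thesis
    by (simp add: nl_deriv_def \<phi>_def)
qed

lemma nl_grad_tendsto:
  fixes f :: "real^'n \<Rightarrow> real"
  assumes lip: "B-lipschitz_on UNIV f"
    and deriv: "(f has_derivative (\<lambda>h. Df \<bullet> h)) (at x)"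
  shows "((\<lambda>nb. nl_grad \<rho> nb f x) \<longlongrightarrow> Df) multi_index_at_top"
proof -
  have "((\<lambda>nb. nl_deriv \<rho> (nb i) (axis i 1) f x) \<longlongrightarrow> Df $ i) multi_index_at_top" for i
    using filterlim_compose[OF nl_deriv_tendsto[OF lip deriv, where v = "axis i 1"]
        filterlim_component_multi_index_at_top]
    by (simp add: inner_axis)
  then have "((\<lambda>nb. \<chi> i. nl_deriv \<rho> (nb i) (axis i 1) f x) \<longlongrightarrow> (\<chi> i. Df $ i)) multi_index_at_top"
    by (rule tendsto_vec_lambda)
  then show ?thesis
    unfolding nl_grad_def by simp
qed

end

theorem theorem7:
  fixes \<rho> :: "nat \<Rightarrow> real \<Rightarrow> real"
    and u ut :: "real^'n \<Rightarrow> real"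
    and Du Dut :: "real^'n \<Rightarrow> real^'n"
    and x0 :: "real^'n" and R :: real and K :: "(real^'n) set"
  assumes rho_meas: "\<And>n. n \<ge> 1 \<Longrightarrow> \<rho> n \<in> borel_measurable lborel"
    and rho_nonneg: "\<And>n t. n \<ge> 1 \<Longrightarrow> \<rho> n t \<ge> 0"
    and rho_int: "\<And>n. n \<ge> 1 \<Longrightarrow> integrable lborel (\<rho> n)"
    and rho_one: "\<And>n. n \<ge> 1 \<Longrightarrow> (LINT t|lborel. \<rho> n t) = 1"
    and rho_tail: "\<And>\<delta>. \<delta> > 0 \<Longrightarrow>
          (\<lambda>n. LINT t:{t. \<delta> < \<bar>t\<bar>}|lborel. \<rho> n t) \<longlonglongrightarrow> 0"
    and u_C1: "\<And>x. (u has_derivative (\<lambda>h. Du x \<bullet> h)) (at x)"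
    and u_C1_cont: "continuous_on UNIV Du"
    and R_pos: "R > 0"
    and ut_C1: "\<And>x. (ut has_derivative (\<lambda>h. Dut x \<bullet> h)) (at x)"
    and ut_C1_cont: "continuous_on UNIV Dut"
    and K_compact: "compact K"
    and K_ball: "ball x0 R \<subseteq> K"
    and ut_eq: "\<And>x. x \<in> ball x0 R \<Longrightarrow> ut x = u x"
    and ut_zero: "\<And>x. x \<notin> K \<Longrightarrow> ut x = 0"
  shows "(\<forall>\<epsilon>>0. \<exists>M. \<forall>nb :: 'n \<Rightarrow> nat. Min (range nb) \<ge> M \<longrightarrow>
            (\<forall>x\<in>ball x0 R.
               \<bar>(ut x - ut x0 - (x - x0) \<bullet> nl_grad \<rho> nb ut x0)
                 - (ut x - ut x0 - (x - x0) \<bullet> Du x0)\<bar> < \<epsilon>))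
       \<and> (\<forall>\<epsilon>>0. \<exists>M. \<forall>nb :: 'n \<Rightarrow> nat. Min (range nb) \<ge> M \<longrightarrow>
            (\<forall>x\<in>ball x0 R.
               \<bar>(ut x0 + (x - x0) \<bullet> nl_grad \<rho> nb ut x0)
                 - (ut x0 + (x - x0) \<bullet> Du x0)\<bar> < \<epsilon>))"
proof -
  \<comment> \<open>\<open>rho_meas\<close> is implied by \<open>rho_int\<close>.\<close>
  interpret approx_identity \<rho>
    by (rule approx_identity.intro[OF rho_nonneg rho_int rho_one rho_tail])
  have "Dut x0 = Du x0"
    by (rule has_derivative_inner_eq_on_open[OF ut_C1[of x0] u_C1[of x0] open_ball[of x0 R]])
       (use R_pos ut_eq in auto)
  moreover obtain B where "B-lipschitz_on UNIV ut"
    using C1_compact_support_imp_lipschitz[OF ut_C1 ut_C1_cont K_compact ut_zero] .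
  ultimately have "((\<lambda>nb. nl_grad \<rho> nb ut x0) \<longlongrightarrow> Du x0) multi_index_at_top"
    using nl_grad_tendsto[OF _ ut_C1[of x0]] by simp
  then have lim: "uniform_limit (ball x0 R) (\<lambda>nb x. (x - x0) \<bullet> nl_grad \<rho> nb ut x0)
      (\<lambda>x. (x - x0) \<bullet> Du x0) multi_index_at_top"
    by (rule uniform_limit_inner_tendsto) (simp add: bounded_translation_minus)
  have "uniform_limit (ball x0 R) (\<lambda>nb x. ut x - ut x0 - (x - x0) \<bullet> nl_grad \<rho> nb ut x0)
      (\<lambda>x. ut x - ut x0 - (x - x0) \<bullet> Du x0) multi_index_at_top"
    by (rule uniform_limit_minus[OF uniform_limit_const lim])
  moreover have "uniform_limit (ball x0 R) (\<lambda>nb x. ut x0 + (x - x0) \<bullet> nl_grad \<rho> nb ut x0)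
      (\<lambda>x. ut x0 + (x - x0) \<bullet> Du x0) multi_index_at_top"
    by (rule uniform_limit_add[OF uniform_limit_const lim])
  ultimately show ?thesis
    unfolding uniform_limit_iff eventually_multi_index_at_top dist_real_def by blast
qed

end
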